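(* For any $F\in\mathscr{F}_{\mathrm{AIFV}}$: (i) $\mathcal{P}^1_{F,0}=\mathcal{P}^1_{F,1}=\{0,1\}$; (ii) for any $i\in\{0,1\}$ and $b\in\mathcal{C}$, if $\mathcal{S}_{F,i}(\lambda)=\emptyset$ and $(i,b)\ne(1,0)$, then $\mathcal{P}^1_{F,i}(b)=\{0,1\}$; (iii) for any $i\in\{0,1\}$ and $s\in\mathcal{S}$, if $\bar{\mathcal{P}}^0_{F,i}(f_i(s))\ne\emptyset$, then $\bar{\mathcal{P}}^2_{F,i}(f_i(s))=\{00\}$.
   Context: $\mathcal{S}$ is a finite source alphabet with $|\mathcal{S}|\ge 2$ and $\mathcal{C}=\{0,1\}$; $\mathcal{A}^k,\mathcal{A}^{\ast},\mathcal{A}^{+}$ are sequences of length $k$, finite, positive finite length; $\lambda$ empty sequence; $\preceq$ prefix, $\prec$ proper prefix; $\mathrm{suff}(x_1\cdots x_n)=x_2\cdots x_n$. A code-tuple $F$ with $m\ge1$ code tables consists of maps $f_i:\mathcal{S}\to\mathcal{C}^{\ast}$ and $\tau_i:\mathcal{S}\to\{0,\dots,m-1\}$, $i\in\{0,\dots,m-1\}$; $|F|=m$. $f_i^{\ast}(\lambda)=\lambda$, $f_i^{\ast}(\pmb{x})=f_i(x_1)f^{\ast}_{\tau_i(x_1)}(\mathrm{suff}(\pmb{x}))$. $\mathcal{S}_{F,i}(\pmb{b})=\{s:f_i(s)=\pmb{b}\}$. For integer $k\ge0$, $\pmb{b}\in\mathcal{C}^{\ast}$: $\mathcal{P}^k_{F,i}(\pmb{b})$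 is the set of $\pmb{c}\in\mathcal{C}^k$ such that some $\pmb{x}=x_1\cdots x_n\in\mathcal{S}^{+}$ has $f_i^{\ast}(\pmb{x})\succeq\pmb{b}\pmb{c}$ and $f_i(x_1)\succeq\pmb{b}$; $\bar{\mathcal{P}}^k_{F,i}(\pmb{b})$ the same with $f_i(x_1)\succ\pmb{b}$; $\mathcal{P}^k_{F,i}=\mathcal{P}^k_{F,i}(\lambda)$, $\bar{\mathcal{P}}^k_{F,i}=\bar{\mathcal{P}}^k_{F,i}(\lambda)$. $\mathscr{F}_{\mathrm{AIFV}}$ is the set of code-tuples $F$ with $|F|=2$ satisfying: (i) $f_0,f_1$ injective; (ii) for all $i\in\{0,1\}$, $s$: $1\notin\bar{\mathcal{P}}^1_{F,i}(f_i(s))$ and $1\notin\bar{\mathcal{P}}^1_{F,i}(f_i(s)0)$; (iii) $f_i(s')\ne f_i(s)0$ for all $i,s,s'$; (iv) $\tau_i(s)=0$ if $\bar{\mathcal{P}}^0_{F,i}(f_i(s))=\emptyset$, and $\tau_i(s)=1$ otherwise; (v) $f_1(s)\ne\lambda$ and $f_1(s)\ne0$ for all $s$; (vi) $0\notin\bar{\mathcal{P}}^1_{F,1}(0)$; (vii) for all $i\in\{0,1\}$, $\pmb{b}\in\mathcal{C}^{\ast}$ with $|\bar{\mathcal{P}}^1_{F,i}(\pmb{b})|=1$: either $f_i(s)\pmb{c}=\pmb{b}$ for some $s\in\mathcal{S}$, $\pmb{c}\in\mathcal{C}^0\cup\mathcal{C}^1$, or $(i,\pmb{b})=(1,0)$.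 *)

theory Defs
  imports "HOL-Library.Sublist"
begin

datatype cbit = B0 | B1

text \<open>A code-tuple with m code tables is represented by a pair (f, tau) of
  maps indexed by the table number i (only i < m matter).\<close>
type_synonym 's codetuple = "(nat \<Rightarrow> 's \<Rightarrow> cbit list) \<times> (nat \<Rightarrow> 's \<Rightarrow> nat)"

fun fstar :: "'s codetuple \<Rightarrow> nat \<Rightarrow> 's list \<Rightarrow> cbit list" where
  "fstar F i [] = []"
| "fstar F i (x # xs) = fst F i x @ fstar F (snd F i x) xs"

definition Ssym :: "'s codetuple \<Rightarrow> nat \<Rightarrow> cbit list \<Rightarrow> 's set" where
  "Ssym F i b = {s. fst F i s = b}"

definition Pset :: "nat \<Rightarrow> 's codetuple \<Rightarrow> nat \<Rightarrow> cbit list \<Rightarrow> cbit list set" where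
  "Pset k F i b = {c. length c = k \<and> (\<exists>x. x \<noteq> [] \<and> prefix (b @ c) (fstar F i x)
                                      \<and> prefix b (fst F i (hd x)))}"

definition Pbar :: "nat \<Rightarrow> 's codetuple \<Rightarrow> nat \<Rightarrow> cbit list \<Rightarrow> cbit list set" where
  "Pbar k F i b = {c. length c = k \<and> (\<exists>x. x \<noteq> [] \<and> prefix (b @ c) (fstar F i x)
                                      \<and> strict_prefix b (fst F i (hd x)))}"

definition AIFV :: "'s codetuple set" where
  "AIFV = {F. let f = fst F; \<tau> = snd F in
      (\<forall>i\<in>{0,1}. inj (f i))
    \<and> (\<forall>i\<in>{0,1}. \<forall>s. [B1] \<notin> Pbar 1 F i (f i s) \<and> [B1] \<notin> Pbar 1 F i (f i s @ [B0]))
    \<and> (\<forall>i\<in>{0,1}. \<forall>s s'. f i s' \<noteq> f i s @ [B0])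
    \<and> (\<forall>i\<in>{0,1}. \<forall>s. \<tau> i s = (if Pbar 0 F i (f i s) = {} then 0 else 1))
    \<and> (\<forall>s. f 1 s \<noteq> [] \<and> f 1 s \<noteq> [B0])
    \<and> [B0] \<notin> Pbar 1 F 1 [B0]
    \<and> (\<forall>i\<in>{0,1}. \<forall>b. card (Pbar 1 F i b) = 1 \<longrightarrow>
          (\<exists>s c. length c \<le> 1 \<and> f i s @ c = b) \<or> (i = 1 \<and> b = [B0]))}"

end

theory Submission
  imports Defs
begin

text \<open>Conditions (ii) and (iii) of AIFV force every proper extension of a codeword \<open>f\<^sub>i(s)\<close>
  by another codeword of the same table to continue with \<open>00\<close>; this is part (iii).
  For the empty prefix, a table without empty codeword has a nonempty set of first bits, and
  condition (vii) excludes that it is a singleton, so both bits occur. If table 0 does contain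
  the empty codeword, then by injectivity and \<open>|S| \<ge> 2\<close> it is a proper prefix of another
  codeword, so by (iv) it is followed by table 1, whose first bits therefore also follow \<open>\<lambda>\<close>
  in table 0. For part (ii), either \<open>b\<close> is itself a codeword and the same continuation argument
  applies, or \<open>b\<close> is a proper prefix of a codeword and condition (vii) applies again.\<close>

lemma cbit_lists_length_1: "{c :: cbit list. length c = 1} = {[B0], [B1]}"
proof -
  have "c = [B0] \<or> c = [B1]" if "length c = 1" for c :: "cbit list"
    using that by (cases c; cases "hd c") auto
  then show ?thesis by auto
qed

lemma Pset_1_subset: "Pset 1 F i b \<subseteq> {[B0], [B1]}"
  unfolding Pset_def cbit_lists_length_1[symmetric] by blast

lemma Pbar_1_subset: "Pbar 1 F i b \<subseteq> {[B0], [B1]}"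
  unfolding Pbar_def cbit_lists_length_1[symmetric] by blast

lemma Pbar_subset_Pset: "Pbar k F i b \<subseteq> Pset k F i b"
  unfolding Pbar_def Pset_def by (auto elim: strict_prefixE)

lemma Pset_1_full_if_Pbar_1_full:
  "Pbar 1 F i b = {[B0], [B1]} \<Longrightarrow> Pset 1 F i b = {[B0], [B1]}"
  using Pbar_subset_Pset[of 1 F i b] Pset_1_subset[of F i b] by blast

lemma take_in_Pbar:
  assumes "fst F i s = b @ d" and "d \<noteq> []" and "k \<le> length d"
  shows "take k d \<in> Pbar k F i b"
proof -
  have "prefix (b @ take k d) (fstar F i [s])"
    using assms(1) by (simp add: take_is_prefix)
  moreover have "strict_prefix b (fst F i (hd [s]))"
    using assms(1,2) by (auto simp: neq_Nil_conv intro: strict_prefixI')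
  ultimately show ?thesis
    unfolding Pbar_def using assms(3) by (intro CollectI conjI exI[of _ "[s]"]) auto
qed

lemma Pbar_codewordE:
  assumes "c \<in> Pbar k F i b"
  obtains s d rest where "fst F i s = b @ d" and "d \<noteq> []" and "prefix c (d @ rest)"
proof -
  from assms obtain s xs where
    prefix: "prefix (b @ c) (fstar F i (s # xs))" and "strict_prefix b (fst F i s)"
    unfolding Pbar_def by (auto simp: neq_Nil_conv)
  then obtain d where d: "fst F i s = b @ d" "d \<noteq> []"
    by (auto elim!: strict_prefixE')
  with prefix have "prefix c (d @ fstar F (snd F i s) xs)" by simp
  with d that show ?thesis by blast
qed

lemma Pbar_0_nonempty_iff: "Pbar 0 F i b \<noteq> {} \<longleftrightarrow> (\<exists>s. strict_prefix b (fst F i s))"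
proof
  assume "Pbar 0 F i b \<noteq> {}"
  then obtain c where "c \<in> Pbar 0 F i b" by blast
  then obtain s d rest where "fst F i s = b @ d" "d \<noteq> []"
    by (rule Pbar_codewordE)
  then show "\<exists>s. strict_prefix b (fst F i s)"
    by (auto simp: neq_Nil_conv intro: strict_prefixI')
next
  assume "\<exists>s. strict_prefix b (fst F i s)"
  then obtain s z zs where "fst F i s = b @ z # zs" by (auto elim: strict_prefixE')
  from take_in_Pbar[OF this] show "Pbar 0 F i b \<noteq> {}" by auto
qed

lemma Pset_next_table_subset: "Pset k F (snd F i s) [] \<subseteq> Pset k F i (fst F i s)"
  unfolding Pset_def by (auto intro!: exI[of _ "s # _"])

lemma AIFV_inj: "F \<in> AIFV \<Longrightarrow> i \<in> {0, 1} \<Longrightarrow> inj (fst F i)"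
  unfolding AIFV_def Let_def by blast

lemma AIFV_B1_notin_Pbar_1:
  "F \<in> AIFV \<Longrightarrow> i \<in> {0, 1} \<Longrightarrow>
     [B1] \<notin> Pbar 1 F i (fst F i s) \<and> [B1] \<notin> Pbar 1 F i (fst F i s @ [B0])"
  unfolding AIFV_def Let_def by blast

lemma AIFV_codeword_neq_snoc_B0: "F \<in> AIFV \<Longrightarrow> i \<in> {0, 1} \<Longrightarrow> fst F i t \<noteq> fst F i s @ [B0]"
  unfolding AIFV_def Let_def by blast

lemma AIFV_next_table:
  "F \<in> AIFV \<Longrightarrow> i \<in> {0, 1} \<Longrightarrow>
     snd F i s = (if Pbar 0 F i (fst F i s) = {} then 0 else 1)"
  unfolding AIFV_def Let_def by blast

lemma AIFV_table_1_nonempty: "F \<in> AIFV \<Longrightarrow> fst F 1 s \<noteq> []"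
  unfolding AIFV_def Let_def by blast

lemma AIFV_card_Pbar_1:
  "F \<in> AIFV \<Longrightarrow> i \<in> {0, 1} \<Longrightarrow> card (Pbar 1 F i b) = 1 \<Longrightarrow>
     (\<exists>s c. length c \<le> 1 \<and> fst F i s @ c = b) \<or> (i = 1 \<and> b = [B0])"
  unfolding AIFV_def Let_def by blast

lemma AIFV_codeword_extension:
  assumes F: "F \<in> AIFV" and i: "i \<in> {0, 1}"
    and "fst F i t = fst F i s @ d" and "d \<noteq> []"
  shows "\<exists>e. d = B0 # B0 # e"
proof -
  obtain z zs where d: "d = z # zs" using \<open>d \<noteq> []\<close> by (cases d) auto
  have "[z] \<in> Pbar 1 F i (fst F i s)"
    using take_in_Pbar[of F i t "fst F i s" d 1] assms(3,4) d by simp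
  with AIFV_B1_notin_Pbar_1[OF F i] have z: "z = B0" by (cases z) auto
  have "zs \<noteq> []" using AIFV_codeword_neq_snoc_B0[OF F i, of t s] assms(3) d z by auto
  then obtain z' zs' where zs: "zs = z' # zs'" by (cases zs) auto
  have "[z'] \<in> Pbar 1 F i (fst F i s @ [B0])"
    using take_in_Pbar[of F i t "fst F i s @ [B0]" zs 1] assms(3) d z zs by simp
  with AIFV_B1_notin_Pbar_1[OF F i] have "z' = B0" by (cases z') auto
  with d z zs show ?thesis by blast
qed

lemma AIFV_Pbar_1_full:
  assumes F: "F \<in> AIFV" and i: "i \<in> {0, 1}"
    and extended: "strict_prefix b (fst F i s)"
    and not_codeword: "\<And>s c. length c \<le> 1 \<Longrightarrow> fst F i s @ c \<noteq> b"
    and "(i, b) \<noteq> (1, [B0])"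
  shows "Pbar 1 F i b = {[B0], [B1]}"
proof -
  from extended obtain z zs where "fst F i s = b @ z # zs" by (rule strict_prefixE')
  from take_in_Pbar[OF this, of 1] have "[z] \<in> Pbar 1 F i b" by simp
  moreover have "card (Pbar 1 F i b) \<noteq> 1"
    using AIFV_card_Pbar_1[OF F i, of b] not_codeword assms(5) by auto
  ultimately show ?thesis
    using Pbar_1_subset[of F i b] by (auto simp: card_1_singleton_iff)
qed

lemma AIFV_Pbar_1_Nil:
  assumes F: "F \<in> AIFV" and i: "i \<in> {0, 1}" and no_empty: "\<And>s. fst F i s \<noteq> []"
  shows "Pbar 1 F i [] = {[B0], [B1]}"
proof (rule AIFV_Pbar_1_full[OF F i])
  show "strict_prefix [] (fst F i undefined)"
    using no_empty[of undefined] by (cases "fst F i undefined") auto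
qed (use no_empty in auto)

lemma AIFV_Pset_1_table_1_Nil:
  assumes F: "F \<in> AIFV"
  shows "Pset 1 F 1 [] = {[B0], [B1]}"
  by (rule Pset_1_full_if_Pbar_1_full[OF AIFV_Pbar_1_Nil[OF F _ AIFV_table_1_nonempty[OF F]]])
    simp

lemma AIFV_Pset_1_Nil:
  assumes card: "card (UNIV :: 's::finite set) \<ge> 2"
    and F: "(F :: 's codetuple) \<in> AIFV" and i: "i \<in> {0, 1}"
  shows "Pset 1 F i [] = {[B0], [B1]}"
proof (cases "\<exists>s. fst F i s = []")
  case False
  then have "fst F i s \<noteq> []" for s by blast
  from AIFV_Pbar_1_Nil[OF F i this] show ?thesis by (rule Pset_1_full_if_Pbar_1_full)
next
  case True
  then obtain s where s: "fst F i s = []" by blast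
  have "UNIV \<noteq> {s}"
  proof
    assume "UNIV = {s}"
    then have "card (UNIV :: 's set) = card {s}" by (rule arg_cong)
    with card show False by simp
  qed
  then obtain t where "t \<noteq> s" by blast
  with s AIFV_inj[OF F i] have "fst F i t \<noteq> []" by (metis inj_eq)
  with s have "strict_prefix (fst F i s) (fst F i t)" by (cases "fst F i t") auto
  then have "Pbar 0 F i (fst F i s) \<noteq> {}" by (auto simp: Pbar_0_nonempty_iff)
  then have "snd F i s = 1" using AIFV_next_table[OF F i, of s] by simp
  then have "Pset 1 F 1 [] \<subseteq> Pset 1 F i []"
    using Pset_next_table_subset[of 1 F i s] s by simp
  then show ?thesis
    using AIFV_Pset_1_table_1_Nil[OF F] Pset_1_subset[of F i "[]"] by auto
qed

lemma AIFV_Pset_1_codeword: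
  assumes card: "card (UNIV :: 's::finite set) \<ge> 2"
    and F: "(F :: 's codetuple) \<in> AIFV" and i: "i \<in> {0, 1}"
  shows "Pset 1 F i (fst F i s) = {[B0], [B1]}"
proof -
  have "snd F i s \<in> {0, 1}" using AIFV_next_table[OF F i, of s] by simp
  from AIFV_Pset_1_Nil[OF card F this] show ?thesis
    using Pset_next_table_subset[of 1 F i s] Pset_1_subset[of F i "fst F i s"] by auto
qed

lemma AIFV_Pset_1_single_bit:
  assumes card: "card (UNIV :: 's::finite set) \<ge> 2"
    and F: "(F :: 's codetuple) \<in> AIFV" and i: "i \<in> {0, 1}"
    and no_empty: "Ssym F i [] = {}" and "(i, b) \<noteq> (1, B0)"
  shows "Pset 1 F i [b] = {[B0], [B1]}"
proof (cases "\<exists>s. fst F i s = [b]")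
  case True
  then show ?thesis using AIFV_Pset_1_codeword[OF card F i] by metis
next
  case False
  have nonempty: "fst F i s \<noteq> []" for s using no_empty unfolding Ssym_def by auto
  have "[b] \<in> Pbar 1 F i []" using AIFV_Pbar_1_Nil[OF F i nonempty] by (cases b) auto
  then obtain s d rest where s: "fst F i s = d" and "d \<noteq> []" "prefix [b] (d @ rest)"
    by (auto elim: Pbar_codewordE)
  then obtain ys where "fst F i s = b # ys" by (cases d) auto
  moreover have "ys \<noteq> []" using False calculation by auto
  ultimately have "strict_prefix [b] (fst F i s)"
    by (auto simp: neq_Nil_conv intro: strict_prefixI')
  then have "Pbar 1 F i [b] = {[B0], [B1]}"
  proof (rule AIFV_Pbar_1_full[OF F i])
    show "fst F i s' @ c \<noteq> [b]" if "length c \<le> 1" for s' c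
      using that False nonempty[of s'] by (cases c) (auto simp: append_eq_Cons_conv)
  qed (use assms(5) in simp)
  then show ?thesis by (rule Pset_1_full_if_Pbar_1_full)
qed

lemma AIFV_Pbar_2_codeword:
  assumes F: "F \<in> AIFV" and i: "i \<in> {0, 1}" and "Pbar 0 F i (fst F i s) \<noteq> {}"
  shows "Pbar 2 F i (fst F i s) = {[B0, B0]}"
proof
  show "Pbar 2 F i (fst F i s) \<subseteq> {[B0, B0]}"
  proof
    fix c assume c: "c \<in> Pbar 2 F i (fst F i s)"
    then obtain t d rest
      where "fst F i t = fst F i s @ d" "d \<noteq> []" and prefix: "prefix c (d @ rest)"
      by (rule Pbar_codewordE)
    with AIFV_codeword_extension[OF F i] obtain e where "d = B0 # B0 # e" by blast
    with prefix have "prefix c (B0 # B0 # e @ rest)" by simp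
    moreover have "length c = 2" using c unfolding Pbar_def by simp
    ultimately show "c \<in> {[B0, B0]}"
      by (auto simp: prefix_def numeral_2_eq_2 length_Suc_conv)
  qed
next
  from assms(3) obtain t where "strict_prefix (fst F i s) (fst F i t)"
    by (auto simp: Pbar_0_nonempty_iff)
  then obtain z zs where "fst F i t = fst F i s @ z # zs" by (rule strict_prefixE')
  with AIFV_codeword_extension[OF F i] obtain e where "fst F i t = fst F i s @ B0 # B0 # e"
    by blast
  from take_in_Pbar[OF this, of 2] show "{[B0, B0]} \<subseteq> Pbar 2 F i (fst F i s)" by simp
qed

theorem lemma30:
  fixes F :: "('s::finite) codetuple"
  assumes "card (UNIV :: 's set) \<ge> 2"
    and "F \<in> AIFV"
  shows "(Pset 1 F 0 [] = {[B0], [B1]} \<and> Pset 1 F 1 [] = {[B0], [B1]})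
       \<and> (\<forall>i\<in>{0, 1}. \<forall>b. Ssym F i [] = {} \<and> (i, b) \<noteq> (1, B0)
              \<longrightarrow> Pset 1 F i [b] = {[B0], [B1]})
       \<and> (\<forall>i\<in>{0, 1}. \<forall>s. Pbar 0 F i (fst F i s) \<noteq> {}
              \<longrightarrow> Pbar 2 F i (fst F i s) = {[B0, B0]})"
proof (intro conjI ballI allI impI)
  show "Pset 1 F 0 [] = {[B0], [B1]}" "Pset 1 F 1 [] = {[B0], [B1]}"
    using AIFV_Pset_1_Nil[OF assms, of 0] AIFV_Pset_1_Nil[OF assms, of 1] by simp_all
  show "Pset 1 F i [b] = {[B0], [B1]}"
    if "i \<in> {0, 1}" and "Ssym F i [] = {} \<and> (i, b) \<noteq> (1, B0)" for i b
    using AIFV_Pset_1_single_bit[OF assms] that by blast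
  show "Pbar 2 F i (fst F i s) = {[B0, B0]}"
    if "i \<in> {0, 1}" and "Pbar 0 F i (fst F i s) \<noteq> {}" for i s
    using AIFV_Pbar_2_codeword[OF assms(2)] that by blast
qed

end
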